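(* In the Ewens setting, let $\Delta W(N,k)=W(N,k+1)-W(N,k)$ for $0\le k\le N-2$. Then for every $k\ge0$: $$\Delta W(k+2,k)=\theta\,(\theta-(k+1))\,[k]_\theta,$$ and for all $N\ge k+3$, $$\Delta W(N,k)=(N-1)\,\Delta W(N-1,k)+\theta^2\,\frac{(N-2)!}{k!}\,[k]_\theta.$$
   Context: Permutations of $\{1,\dots,N\}$ are written in one-line notation; $\mathfrak S_N$ is the set of all of them. An entry $\pi_j$ is a left-to-right maximum if $\pi_j>\pi_i$ for all $i<j$; $\mathrm{lrm}(\pi)$ is the number of left-to-right maxima. Let $\theta>0$. For $0\le k\le N-1$, a permutation $\pi\in\mathfrak S_N$ is $k$-winnable if the first index $j>k$ such that $\pi_j$ is a left-to-right maximum satisfies $\pi_j=N$. Ewens setting: $W(N,k)=\sum_{k\text{-winnable }\pi\in\mathfrak S_N}\theta^{\mathrm{lrm}(\pi)}$, with $W(N,N):=0$, and $[m]_\theta=\theta(\theta+1)\cdots(\theta+m-1)$ with $[0]_\theta=1$. *)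

theory Defs
  imports Complex_Main "HOL-Combinatorics.Permutations"
begin

text \<open>Permutations of {1..N} in one-line notation: a bijection p with p permutes {1..N};
  the entry at position j is p j.\<close>

definition is_lrm :: "(nat \<Rightarrow> nat) \<Rightarrow> nat \<Rightarrow> bool" where
  "is_lrm p j \<longleftrightarrow> (\<forall>i. 1 \<le> i \<and> i < j \<longrightarrow> p i < p j)"

definition lrm :: "nat \<Rightarrow> (nat \<Rightarrow> nat) \<Rightarrow> nat" where
  "lrm N p = card {j \<in> {1..N}. is_lrm p j}"

definition winnable :: "nat \<Rightarrow> nat \<Rightarrow> (nat \<Rightarrow> nat) \<Rightarrow> bool" where
  "winnable N k p \<longleftrightarrow>
     (\<exists>j. k < j \<and> j \<le> N \<and> is_lrm p j \<and>
          (\<forall>i. k < i \<and> i < j \<longrightarrow> \<not> is_lrm p i) \<and> p j = N)"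

definition W :: "real \<Rightarrow> nat \<Rightarrow> nat \<Rightarrow> real" where
  "W \<theta> N k = (if k < N then
      (\<Sum>p\<in>{p. p permutes {1..N} \<and> winnable N k p}. \<theta> ^ lrm N p) else 0)"

definition DeltaW :: "real \<Rightarrow> nat \<Rightarrow> nat \<Rightarrow> real" where
  "DeltaW \<theta> N k = W \<theta> N (k + 1) - W \<theta> N k"

end

theory Submission
  imports Defs
begin

text \<open>Decomposing a permutation by its last entry: that entry is a left-to-right maximum exactly
  when it is the largest value, so the Ewens weight picks up a factor \<open>\<theta>\<close> for that single choice
  of the last value and a factor 1 for each of the others.  To make this recursion work, one
  considers arrangements of an arbitrary finite value set \<open>S\<close> in the positions \<open>1..n\<close>.
  Writing \<open>A(n,k)\<close> for the weight of arrangements with no left-to-right maximum after position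
  \<open>k\<close>, one gets \<open>A(n,k) = [n]\<^sub>\<theta>\<close> for \<open>n \<le> k\<close>, \<open>A(n,k) = (n-1) A(n-1,k)\<close> otherwise, and
  \<open>W(n,k) = \<theta> A(n-1,k) + (n-1) W(n-1,k)\<close> for \<open>n > k\<close>.  Taking differences in \<open>k\<close> gives the
  recursion for \<open>\<Delta>W\<close>, the inhomogeneous term being \<open>\<theta>\<close> times \<open>A(n-1,k+1) - A(n-1,k)\<close>.\<close>

text \<open>Bijections from the positions \<open>1..n\<close> onto \<open>S\<close>, normalised to the identity elsewhere so that
  \<open>arrangements n {1..n}\<close> is exactly the set of permutations used in \<open>W\<close>.\<close>
definition arrangements :: "nat \<Rightarrow> nat set \<Rightarrow> (nat \<Rightarrow> nat) set" where
  "arrangements n S = {p. bij_betw p {1..n} S \<and> (\<forall>i. i \<notin> {1..n} \<longrightarrow> p i = i)}"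

lemma arrangements_0: "arrangements 0 S = (if S = {} then {id} else {})"
  by (auto simp: arrangements_def bij_betw_def fun_eq_iff)

lemma arrangements_self: "arrangements n {1..n} = {p. p permutes {1..n}}"
  by (auto simp: arrangements_def permutes_imp_bij permutes_not_in intro: bij_imp_permutes)

lemma arrangement_in_values: "p \<in> arrangements n S \<Longrightarrow> j \<in> {1..n} \<Longrightarrow> p j \<in> S"
  by (auto simp: arrangements_def bij_betw_def)

lemma finite_arrangements:
  assumes "finite S" shows "finite (arrangements n S)"
proof -
  have "inj_on (\<lambda>p. restrict p {1..n}) (arrangements n S)"
  proof (rule inj_onI)
    fix p q assume "p \<in> arrangements n S" "q \<in> arrangements n S"
      and "restrict p {1..n} = restrict q {1..n}"
    then show "p = q"
      by (auto simp: arrangements_def fun_eq_iff restrict_def split: if_splits) metis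
  qed
  moreover have "(\<lambda>p. restrict p {1..n}) ` arrangements n S \<subseteq> PiE {1..n} (\<lambda>_. S)"
    by (auto simp: arrangements_def bij_betw_def)
  ultimately show ?thesis
    using assms by (meson finite_PiE finite_atLeastAtMost finite_imageD finite_subset)
qed

lemma arrangements_Suc:
  "arrangements (Suc n) S = (\<lambda>(v, q). q(Suc n := v)) ` (SIGMA v:S. arrangements n (S - {v}))"
proof (intro equalityI subsetI)
  fix p assume p: "p \<in> arrangements (Suc n) S"
  define q where "q = p(Suc n := Suc n)"
  have inj: "inj_on p {1..Suc n}" and im: "p ` {1..Suc n} = S"
    using p by (auto simp: arrangements_def bij_betw_def)
  have split: "{1..Suc n} = insert (Suc n) {1..n}" by auto
  have "q ` {1..n} = p ` {1..n}" by (auto simp: q_def)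
  also have "\<dots> = S - {p (Suc n)}"
    using inj unfolding im[symmetric] split by (simp add: Diff_insert_absorb)
  finally have "q ` {1..n} = S - {p (Suc n)}" .
  moreover have "inj_on q {1..n}"
    using inj by (auto simp: inj_on_def q_def)
  ultimately have "q \<in> arrangements n (S - {p (Suc n)})"
    using p by (auto simp: arrangements_def bij_betw_def q_def)
  moreover have "p (Suc n) \<in> S" using im by auto
  ultimately show "p \<in> (\<lambda>(v, q). q(Suc n := v)) ` (SIGMA v:S. arrangements n (S - {v}))"
    by (intro image_eqI[where x = "(p (Suc n), q)"]) (auto simp: q_def)
next
  fix p assume "p \<in> (\<lambda>(v, q). q(Suc n := v)) ` (SIGMA v:S. arrangements n (S - {v}))"
  then obtain v q where v: "v \<in> S" and q: "q \<in> arrangements n (S - {v})"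
    and p: "p = q(Suc n := v)" by auto
  have inj: "inj_on q {1..n}" and im: "q ` {1..n} = S - {v}"
    using q by (auto simp: arrangements_def bij_betw_def)
  have split: "{1..Suc n} = insert (Suc n) {1..n}" by auto
  have agree: "p i = q i" if "i \<in> {1..n}" for i
    using that by (simp add: p)
  have "p ` {1..n} = q ` {1..n}"
    by (rule image_cong) (simp_all add: agree)
  with im have img: "p ` {1..n} = S - {v}" by simp
  have "inj_on p {1..n}"
    using inj by (rule inj_on_cong[THEN iffD2, rotated]) (simp add: agree)
  then have "inj_on p {1..Suc n}"
    unfolding split using img by (simp add: p)
  moreover have "p ` {1..Suc n} = S"
    unfolding split image_insert img using v by (auto simp: p)
  ultimately show "p \<in> arrangements (Suc n) S"
    using q by (auto simp: arrangements_def bij_betw_def p)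
qed

lemma inj_on_arrangements_Suc:
  "inj_on (\<lambda>(v, q). q(Suc n := v)) (SIGMA v:S. arrangements n (S - {v}))"
proof (rule inj_onI, clarify)
  fix v q w r assume "q \<in> arrangements n (S - {v})" "r \<in> arrangements n (S - {w})"
    and eq: "q(Suc n := v) = r(Suc n := w)"
  then have "q (Suc n) = r (Suc n)" by (simp add: arrangements_def)
  then have "q = r"
    using eq by (auto simp: fun_eq_iff split: if_splits)
  then show "v = w \<and> q = r"
    using eq by (auto dest: fun_upd_eqD)
qed

lemma sum_arrangements_Suc:
  assumes "finite S"
  shows "(\<Sum>p\<in>arrangements (Suc n) S. f p) =
    (\<Sum>v\<in>S. \<Sum>q\<in>arrangements n (S - {v}). f (q(Suc n := v)))"
  unfolding arrangements_Suc sum.reindex[OF inj_on_arrangements_Suc]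
  using assms by (subst sum.Sigma) (auto simp: finite_arrangements case_prod_unfold)

lemma is_lrm_fun_upd_le: "j \<le> n \<Longrightarrow> is_lrm (q(Suc n := v)) j = is_lrm q j"
  by (auto simp: is_lrm_def)

lemma is_lrm_last_iff_Max:
  assumes "finite S" "v \<in> S" "q \<in> arrangements n (S - {v})"
  shows "is_lrm (q(Suc n := v)) (Suc n) \<longleftrightarrow> v = Max S"
proof -
  have "is_lrm (q(Suc n := v)) (Suc n) \<longleftrightarrow> (\<forall>x \<in> q ` {1..n}. x < v)"
    unfolding is_lrm_def by auto
  also have "q ` {1..n} = S - {v}"
    using assms(3) by (auto simp: arrangements_def bij_betw_def)
  also have "(\<forall>x \<in> S - {v}. x < v) \<longleftrightarrow> (\<forall>x \<in> S. x \<le> v)"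
    by (auto simp: le_less)
  also have "\<dots> \<longleftrightarrow> v = Max S"
    using assms(1,2) by (auto intro: Max_eqI[symmetric])
  finally show ?thesis .
qed

lemma lrm_fun_upd_Suc:
  "lrm (Suc n) (q(Suc n := v)) = lrm n q + (if is_lrm (q(Suc n := v)) (Suc n) then 1 else 0)"
proof -
  have "{j \<in> {1..Suc n}. is_lrm (q(Suc n := v)) j} =
        {j \<in> {1..n}. is_lrm q j} \<union> (if is_lrm (q(Suc n := v)) (Suc n) then {Suc n} else {})"
    by (auto simp: is_lrm_fun_upd_le le_Suc_eq)
  then show ?thesis unfolding lrm_def by (simp add: card_insert_if)
qed

lemma Max_Diff_singleton:
  assumes "finite S" "v \<in> S" "v \<noteq> Max S"
  shows "Max (S - {v}) = Max S"
proof (rule Max_eqI)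
  show "Max S \<in> S - {v}" using assms Max_in by blast
qed (use assms in auto)

definition lrm_weight :: "real \<Rightarrow> nat \<Rightarrow> nat set \<Rightarrow> ((nat \<Rightarrow> nat) \<Rightarrow> bool) \<Rightarrow> real" where
  "lrm_weight t n S P = (\<Sum>p\<in>arrangements n S. if P p then t ^ lrm n p else 0)"

lemma lrm_weight_cong:
  "(\<And>p. p \<in> arrangements n S \<Longrightarrow> P p \<longleftrightarrow> Q p) \<Longrightarrow> lrm_weight t n S P = lrm_weight t n S Q"
  unfolding lrm_weight_def by (rule sum.cong) auto

lemma lrm_weight_False [simp]: "lrm_weight t n S (\<lambda>_. False) = 0"
  by (simp add: lrm_weight_def)

lemma lrm_weight_Suc:
  assumes S: "finite S" "card S = Suc n"
    and P: "\<And>v q. v \<in> S \<Longrightarrow> q \<in> arrangements n (S - {v}) \<Longrightarrow>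
              P (q(Suc n := v)) \<longleftrightarrow> (if v = Max S then A q else B q)"
    and A: "lrm_weight t n (S - {Max S}) A = a"
    and B: "\<And>v. v \<in> S \<Longrightarrow> v \<noteq> Max S \<Longrightarrow> lrm_weight t n (S - {v}) B = b"
  shows "lrm_weight t (Suc n) S P = t * a + real n * b"
proof -
  have "S \<noteq> {}" using S by auto
  then have Max: "Max S \<in> S" using S(1) by simp
  have "lrm_weight t (Suc n) S P = (\<Sum>v\<in>S. \<Sum>q\<in>arrangements n (S - {v}).
      if P (q(Suc n := v)) then t ^ lrm (Suc n) (q(Suc n := v)) else 0)"
    unfolding lrm_weight_def using S(1) by (rule sum_arrangements_Suc)
  also have "\<dots> = (\<Sum>v\<in>S. if v = Max S then t * lrm_weight t n (S - {v}) A
                                         else lrm_weight t n (S - {v}) B)"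
    unfolding lrm_weight_def
  proof (rule sum.cong[OF refl])
    fix v assume v: "v \<in> S"
    have "(if P (q(Suc n := v)) then t ^ lrm (Suc n) (q(Suc n := v)) else 0) =
          (if v = Max S then t * (if A q then t ^ lrm n q else 0)
           else (if B q then t ^ lrm n q else 0))"
      if q: "q \<in> arrangements n (S - {v})" for q
    proof -
      have "lrm (Suc n) (q(Suc n := v)) = lrm n q + (if v = Max S then 1 else 0)"
        using is_lrm_last_iff_Max[OF S(1) v q] by (simp add: lrm_fun_upd_Suc)
      with P[OF v q] show ?thesis by (cases "v = Max S") simp_all
    qed
    then show "(\<Sum>q\<in>arrangements n (S - {v}).
            if P (q(Suc n := v)) then t ^ lrm (Suc n) (q(Suc n := v)) else 0) =
          (if v = Max S then t * (\<Sum>q\<in>arrangements n (S - {v}). if A q then t ^ lrm n q else 0)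
           else (\<Sum>q\<in>arrangements n (S - {v}). if B q then t ^ lrm n q else 0))"
      by (simp add: sum_distrib_left cong: sum.cong)
  qed
  also have "\<dots> = t * a + (\<Sum>v\<in>S - {Max S}. b)"
    using S(1) Max A B by (simp add: sum.remove[of _ "Max S"])
  also have "\<dots> = t * a + real n * b"
    using S Max by simp
  finally show ?thesis .
qed

lemma lrm_weight_all:
  "finite S \<Longrightarrow> card S = n \<Longrightarrow> lrm_weight t n S (\<lambda>_. True) = pochhammer t n"
proof (induction n arbitrary: S)
  case 0
  then have "S = {}" by simp
  then show ?case by (simp add: lrm_weight_def arrangements_0 lrm_def)
next
  case (Suc n)
  have IH: "lrm_weight t n (S - {v}) (\<lambda>_. True) = pochhammer t n" if "v \<in> S" for v
    using Suc.prems that by (intro Suc.IH) auto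
  have "Max S \<in> S"
    using Suc.prems by (intro Max_in) auto
  then have "lrm_weight t (Suc n) S (\<lambda>_. True) = t * pochhammer t n + real n * pochhammer t n"
    by (intro lrm_weight_Suc[OF Suc.prems, where A = "\<lambda>_. True" and B = "\<lambda>_. True"])
      (simp_all add: IH)
  then show ?case by (simp add: pochhammer_Suc algebra_simps)
qed

definition no_lrm_after :: "nat \<Rightarrow> nat \<Rightarrow> (nat \<Rightarrow> nat) \<Rightarrow> bool" where
  "no_lrm_after k n p \<longleftrightarrow> (\<forall>i. k < i \<and> i \<le> n \<longrightarrow> \<not> is_lrm p i)"

definition first_lrm_after :: "nat \<Rightarrow> nat \<Rightarrow> nat \<Rightarrow> (nat \<Rightarrow> nat) \<Rightarrow> bool" where
  "first_lrm_after k n m p \<longleftrightarrow>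
     (\<exists>j. k < j \<and> j \<le> n \<and> is_lrm p j \<and> (\<forall>i. k < i \<and> i < j \<longrightarrow> \<not> is_lrm p i) \<and> p j = m)"

lemma winnable_iff_first_lrm_after: "winnable N k p \<longleftrightarrow> first_lrm_after k N N p"
  unfolding winnable_def first_lrm_after_def ..

lemma no_lrm_after_fun_upd_Suc:
  "k \<le> n \<Longrightarrow> no_lrm_after k (Suc n) (q(Suc n := v)) \<longleftrightarrow>
    no_lrm_after k n q \<and> \<not> is_lrm (q(Suc n := v)) (Suc n)"
  unfolding no_lrm_after_def by (auto simp: is_lrm_fun_upd_le le_Suc_eq)

lemma first_lrm_after_fun_upd_Suc:
  assumes "k \<le> n"
  shows "first_lrm_after k (Suc n) m (q(Suc n := v)) \<longleftrightarrow>
    first_lrm_after k n m q \<or> (no_lrm_after k n q \<and> is_lrm (q(Suc n := v)) (Suc n) \<and> v = m)"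
proof
  assume "first_lrm_after k (Suc n) m (q(Suc n := v))"
  then obtain j where j: "k < j" "j \<le> Suc n" "is_lrm (q(Suc n := v)) j"
    "\<forall>i. k < i \<and> i < j \<longrightarrow> \<not> is_lrm (q(Suc n := v)) i" "(q(Suc n := v)) j = m"
    unfolding first_lrm_after_def by blast
  show "first_lrm_after k n m q \<or> (no_lrm_after k n q \<and> is_lrm (q(Suc n := v)) (Suc n) \<and> v = m)"
  proof (cases "j = Suc n")
    case True
    then show ?thesis using j by (auto simp: no_lrm_after_def is_lrm_fun_upd_le)
  next
    case False
    then show ?thesis using j unfolding first_lrm_after_def
      by (intro disjI1 exI[of _ j]) (auto simp: is_lrm_fun_upd_le)
  qed
next
  assume "first_lrm_after k n m q \<or> (no_lrm_after k n q \<and> is_lrm (q(Suc n := v)) (Suc n) \<and> v = m)"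
  then show "first_lrm_after k (Suc n) m (q(Suc n := v))"
  proof
    assume "first_lrm_after k n m q"
    then obtain j where "k < j" "j \<le> n" "is_lrm q j"
      "\<forall>i. k < i \<and> i < j \<longrightarrow> \<not> is_lrm q i" "q j = m"
      unfolding first_lrm_after_def by blast
    then show ?thesis unfolding first_lrm_after_def
      by (intro exI[of _ j]) (auto simp: is_lrm_fun_upd_le)
  next
    assume "no_lrm_after k n q \<and> is_lrm (q(Suc n := v)) (Suc n) \<and> v = m"
    with assms show ?thesis unfolding first_lrm_after_def no_lrm_after_def
      by (intro exI[of _ "Suc n"]) (auto simp: is_lrm_fun_upd_le)
  qed
qed

lemma not_first_lrm_after_missing_value:
  assumes "q \<in> arrangements n (S - {m})"
  shows "\<not> first_lrm_after k n m q"
proof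
  assume "first_lrm_after k n m q"
  then obtain j where "k < j" "j \<le> n" "q j = m"
    unfolding first_lrm_after_def by blast
  moreover from this have "q j \<in> S - {m}"
    by (intro arrangement_in_values[OF assms]) auto
  ultimately show False by simp
qed

fun no_lrm_after_weight :: "real \<Rightarrow> nat \<Rightarrow> nat \<Rightarrow> real" where
  "no_lrm_after_weight t k 0 = 1"
| "no_lrm_after_weight t k (Suc n) =
    (if n < k then pochhammer t (Suc n) else real n * no_lrm_after_weight t k n)"

fun winnable_weight :: "real \<Rightarrow> nat \<Rightarrow> nat \<Rightarrow> real" where
  "winnable_weight t k 0 = 0"
| "winnable_weight t k (Suc n) =
    (if k \<le> n then t * no_lrm_after_weight t k n + real n * winnable_weight t k n else 0)"

lemma no_lrm_after_weight_le: "n \<le> k \<Longrightarrow> no_lrm_after_weight t k n = pochhammer t n"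
  by (cases n) auto

lemma winnable_weight_le: "n \<le> k \<Longrightarrow> winnable_weight t k n = 0"
  by (cases n) auto

lemma lrm_weight_no_lrm_after:
  "finite S \<Longrightarrow> card S = n \<Longrightarrow> lrm_weight t n S (no_lrm_after k n) = no_lrm_after_weight t k n"
proof (induction n arbitrary: S)
  case 0
  then have "S = {}" by simp
  then show ?case by (simp add: lrm_weight_def arrangements_0 lrm_def no_lrm_after_def)
next
  case (Suc n)
  show ?case
  proof (cases "n < k")
    case True
    then have "lrm_weight t (Suc n) S (no_lrm_after k (Suc n)) = lrm_weight t (Suc n) S (\<lambda>_. True)"
      by (intro lrm_weight_cong) (auto simp: no_lrm_after_def)
    with True Suc.prems show ?thesis by (simp add: lrm_weight_all)
  next
    case False
    have IH: "lrm_weight t n (S - {v}) (no_lrm_after k n) = no_lrm_after_weight t k n"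
      if "v \<in> S" for v
      using Suc.prems that by (intro Suc.IH) auto
    have "lrm_weight t (Suc n) S (no_lrm_after k (Suc n)) = t * 0 + real n * no_lrm_after_weight t k n"
    proof (rule lrm_weight_Suc[OF Suc.prems, where A = "\<lambda>_. False" and B = "no_lrm_after k n"])
      fix v q assume v: "v \<in> S" and q: "q \<in> arrangements n (S - {v})"
      show "no_lrm_after k (Suc n) (q(Suc n := v)) \<longleftrightarrow>
          (if v = Max S then False else no_lrm_after k n q)"
        using False is_lrm_last_iff_Max[OF Suc.prems(1) v q]
        by (simp add: no_lrm_after_fun_upd_Suc)
    qed (simp_all add: IH)
    with False show ?thesis by simp
  qed
qed

lemma lrm_weight_first_lrm_after_Max:
  "finite S \<Longrightarrow> card S = n \<Longrightarrow>
    lrm_weight t n S (first_lrm_after k n (Max S)) = winnable_weight t k n"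
proof (induction n arbitrary: S)
  case 0
  have "lrm_weight t 0 S (first_lrm_after k 0 (Max S)) = lrm_weight t 0 S (\<lambda>_. False)"
    by (intro lrm_weight_cong) (simp add: first_lrm_after_def)
  then show ?case by simp
next
  case (Suc n)
  show ?case
  proof (cases "k \<le> n")
    case False
    then have "lrm_weight t (Suc n) S (first_lrm_after k (Suc n) (Max S)) =
        lrm_weight t (Suc n) S (\<lambda>_. False)"
      by (intro lrm_weight_cong) (auto simp: first_lrm_after_def)
    with False show ?thesis by simp
  next
    case True
    have Max: "Max S \<in> S"
      using Suc.prems by (intro Max_in) auto
    have IH: "lrm_weight t n (S - {v}) (first_lrm_after k n (Max S)) = winnable_weight t k n"
      if "v \<in> S" "v \<noteq> Max S" for v
      using Suc.IH[of "S - {v}"] Suc.prems that by (simp add: Max_Diff_singleton)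
    have "lrm_weight t (Suc n) S (first_lrm_after k (Suc n) (Max S)) =
        t * no_lrm_after_weight t k n + real n * winnable_weight t k n"
    proof (rule lrm_weight_Suc[OF Suc.prems,
          where A = "no_lrm_after k n" and B = "first_lrm_after k n (Max S)"])
      fix v q assume v: "v \<in> S" and q: "q \<in> arrangements n (S - {v})"
      show "first_lrm_after k (Suc n) (Max S) (q(Suc n := v)) \<longleftrightarrow>
          (if v = Max S then no_lrm_after k n q else first_lrm_after k n (Max S) q)"
        using first_lrm_after_fun_upd_Suc[OF True, of "Max S" q v]
          is_lrm_last_iff_Max[OF Suc.prems(1) v q] not_first_lrm_after_missing_value[OF q, of k]
        by (cases "v = Max S") simp_all
    next
      show "lrm_weight t n (S - {Max S}) (no_lrm_after k n) = no_lrm_after_weight t k n"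
        using Suc.prems Max by (intro lrm_weight_no_lrm_after) auto
    qed (rule IH)
    with True show ?thesis by simp
  qed
qed

lemma W_eq_winnable_weight: "W t N k = winnable_weight t k N"
proof (cases "k < N")
  case True
  then have Max: "Max {1..N} = N" by (simp add: Max_eq_iff)
  have "W t N k = (\<Sum>p\<in>{p \<in> {p. p permutes {1..N}}. first_lrm_after k N N p}. t ^ lrm N p)"
    using True by (simp add: W_def winnable_iff_first_lrm_after)
  also have "\<dots> = lrm_weight t N {1..N} (first_lrm_after k N (Max {1..N}))"
    unfolding lrm_weight_def arrangements_self Max by (intro sum.inter_filter finite_permutations) simp
  also have "\<dots> = winnable_weight t k N"
    by (simp add: lrm_weight_first_lrm_after_Max)
  finally show ?thesis .
next
  case False
  then show ?thesis by (simp add: W_def winnable_weight_le)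
qed

lemma no_lrm_after_weight_Suc_diff:
  "no_lrm_after_weight t (Suc k) (Suc k + m) - no_lrm_after_weight t k (Suc k + m) =
    t * pochhammer t k * fact (k + m) / fact k"
proof (induction m)
  case 0
  then show ?case by (simp add: no_lrm_after_weight_le pochhammer_Suc algebra_simps)
next
  case (Suc m)
  have "no_lrm_after_weight t (Suc k) (Suc k + Suc m) - no_lrm_after_weight t k (Suc k + Suc m) =
      real (Suc k + m) * (no_lrm_after_weight t (Suc k) (Suc k + m) - no_lrm_after_weight t k (Suc k + m))"
    by (simp add: algebra_simps)
  also have "\<dots> = t * pochhammer t k * fact (k + Suc m) / fact k"
    using Suc by (simp add: algebra_simps)
  finally show ?case .
qed

lemma DeltaW_Suc_Suc: "DeltaW t (k + 2) k = t * (t - real (k + 1)) * pochhammer t k"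
  by (simp add: DeltaW_def W_eq_winnable_weight winnable_weight_le no_lrm_after_weight_le
      pochhammer_Suc algebra_simps)

lemma DeltaW_rec:
  assumes "k + 3 \<le> N"
  shows "DeltaW t N k = real (N - 1) * DeltaW t (N - 1) k
    + t^2 * (fact (N - 2) / fact k) * pochhammer t k"
proof -
  obtain m where N: "N = Suc (Suc k + m)"
    using assms by (intro that[of "N - (k + 2)"]) simp
  have "DeltaW t N k = winnable_weight t (Suc k) (Suc (Suc k + m)) - winnable_weight t k (Suc (Suc k + m))"
    by (simp add: DeltaW_def W_eq_winnable_weight N)
  also have "\<dots> = real (Suc k + m) * (winnable_weight t (Suc k) (Suc k + m) - winnable_weight t k (Suc k + m))
      + t * (no_lrm_after_weight t (Suc k) (Suc k + m) - no_lrm_after_weight t k (Suc k + m))"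
    by (simp add: algebra_simps)
  also have "\<dots> = real (N - 1) * DeltaW t (N - 1) k + t^2 * (fact (N - 2) / fact k) * pochhammer t k"
    unfolding no_lrm_after_weight_Suc_diff
    by (simp add: DeltaW_def W_eq_winnable_weight N power2_eq_square)
  finally show ?thesis .
qed

theorem corollary4p4:
  fixes \<theta> :: real and k :: nat
  assumes "\<theta> > 0"
  shows "DeltaW \<theta> (k + 2) k = \<theta> * (\<theta> - real (k + 1)) * pochhammer \<theta> k
     \<and> (\<forall>N. N \<ge> k + 3 \<longrightarrow>
          DeltaW \<theta> N k = real (N - 1) * DeltaW \<theta> (N - 1) k
            + \<theta>^2 * (fact (N - 2) / fact k) * pochhammer \<theta> k)"
  using DeltaW_Suc_Suc DeltaW_rec by blast

end
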